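(* Let $\Omega>0$, let $V_0,V_1$ be column indices of $X\in\mathbb{R}^{K\times d}$ with $X[i,V_0],X[i,V_1]\in[-\Omega,\Omega]$ for all $i\in[K]$, let $C$ be a column index with $X[i,C]\in\{0,1\}$ for all $i\in[K]$, and let $E$ be a target column index. Then there exists a single transformer layer that simulates the selection operation: for every $i\in[K]$, it writes $X[i,V_1]$ into entry $(i,E)$ if $X[i,C]=1$, and writes $X[i,V_0]$ into entry $(i,E)$ otherwise.
   Context: Conventions: rows/columns indexed from $1$; $X[i,j]$ is the $(i,j)$ entry. $\phi(x)=\max\{x,0\}$ entrywise. Hardmax $\sigma$: row $i$ of $\sigma(\Phi)$ is $\frac{1}{|S_i|}\sum_{k\in S_i}e_k$, $S_i=\{k:\Phi_{ik}=\max_j\Phi_{ij}\}$. For a weighted hypergraph with incident matrix $A\in\mathbb{R}^{n_v\times n_e}$ ($A_{ij}=w(e_j)$ if vertex $v_i$ lies in hyperedge $e_j$, else $0$) and $K\ge\max\{n_v,n_e\}+1$, the padded incident matrix $\widetilde A\in\mathbb{R}^{K\times K}$ has $\widetilde A_{i+1,j+1}=A_{ij}$ and zeros elsewhere. A transformer layer acting on $X\in\mathbb{R}^{K\times d}$ is $f(X,\widetilde A)=f_{\mathrm{mlp}}(f_{\mathrm{attn}}(X,\widetilde A))$, where $f_{\mathrm{attn}}(X,\widetilde A)=\sum_{i\in M_A}\psi^{(i)}(X,\widetilde A)+\sum_{i\in M_{A^\top}}\psi^{(i)}(X,\widetilde A^\top)+\sum_{i\in M}\psi^{(i)}(X,I_K)+X$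 with heads $\psi(X,B)=B\,\sigma(XW_QW_K^\top X^\top)XW_V$ ($W_Q,W_K\in\mathbb{R}^{d\times2}$, $W_V\in\mathbb{R}^{d\times d}$), and $f_{\mathrm{mlp}}(X)=Z^{(4)}W^{(4)}+X$ with $Z^{(1)}=X$, $Z^{(j+1)}=\phi(Z^{(j)}W^{(j)})$ for $j=1,2,3$, $W^{(j)}\in\mathbb{R}^{d\times d}$. Storage convention: scalars are stored in the top row of a column (other entries $0$), arrays of length $K-1$ in rows $2,\dots,K$ (top entry $0$); $X$ contains designated columns $B_{\mathrm{global}}$ (top entry $1$, others $0$), $B_{\mathrm{local}}$ (top entry $0$, others $1$), and may contain scratchpad columns. "Simulating an operation" means the layer's weights can be chosen so that applying the layer to $X$ performs the stated update. *)

theory Defs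
  imports Complex_Main
begin

text \<open>Matrices are functions nat => nat => real, indexed from 1; only the entries
  in the relevant index ranges matter.\<close>

type_synonym mat = "nat \<Rightarrow> nat \<Rightarrow> real"

definition mmul :: "nat \<Rightarrow> mat \<Rightarrow> mat \<Rightarrow> mat" where
  "mmul n A B = (\<lambda>i j. \<Sum>k=1..n. A i k * B k j)"

definition mtrans :: "mat \<Rightarrow> mat" where
  "mtrans A = (\<lambda>i j. A j i)"

definition madd :: "mat \<Rightarrow> mat \<Rightarrow> mat" where
  "madd A B = (\<lambda>i j. A i j + B i j)"

definition mzero :: mat where
  "mzero = (\<lambda>i j. 0)"

definition idm :: mat where
  "idm = (\<lambda>i j. if i = j then 1 else 0)"

definition relu :: "mat \<Rightarrow> mat" where
  "relu A = (\<lambda>i j. max (A i j) 0)"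

definition argmax_set :: "nat \<Rightarrow> mat \<Rightarrow> nat \<Rightarrow> nat set" where
  "argmax_set K P i = {k \<in> {1..K}. P i k = Max ((\<lambda>j. P i j) ` {1..K})}"

definition hardmax :: "nat \<Rightarrow> mat \<Rightarrow> mat" where
  "hardmax K P = (\<lambda>i k. if k \<in> argmax_set K P i then 1 / real (card (argmax_set K P i)) else 0)"

text \<open>Attention head psi(X,B) = B sigma(X W_Q W_K^T X^T) X W_V, X in R^{K x d},
  W_Q, W_K in R^{d x 2}, W_V in R^{d x d}, B in R^{K x K}.\<close>
definition head :: "nat \<Rightarrow> nat \<Rightarrow> mat \<times> mat \<times> mat \<Rightarrow> mat \<Rightarrow> mat \<Rightarrow> mat" where
  "head K d W X B = (case W of (WQ, WK, WV) \<Rightarrow>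
     mmul K B (mmul d (mmul K (hardmax K
        (mmul d (mmul 2 (mmul d X WQ) (mtrans WK)) (mtrans X))) X) WV))"

definition sum_heads :: "nat \<Rightarrow> nat \<Rightarrow> (mat \<times> mat \<times> mat) list \<Rightarrow> mat \<Rightarrow> mat \<Rightarrow> mat" where
  "sum_heads K d hs X B = foldr (\<lambda>W acc. madd (head K d W X B) acc) hs mzero"

record tlayer =
  heads_A  :: "(mat \<times> mat \<times> mat) list"
  heads_AT :: "(mat \<times> mat \<times> mat) list"
  heads_I  :: "(mat \<times> mat \<times> mat) list"
  W1 :: mat
  W2 :: mat
  W3 :: mat
  W4 :: mat

definition f_attn :: "nat \<Rightarrow> nat \<Rightarrow> tlayer \<Rightarrow> mat \<Rightarrow> mat \<Rightarrow> mat" where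
  "f_attn K d L X A =
     madd (sum_heads K d (heads_A L) X A)
      (madd (sum_heads K d (heads_AT L) X (mtrans A))
       (madd (sum_heads K d (heads_I L) X idm) X))"

definition f_mlp :: "nat \<Rightarrow> tlayer \<Rightarrow> mat \<Rightarrow> mat" where
  "f_mlp d L X =
     (let Z2 = relu (mmul d X (W1 L));
          Z3 = relu (mmul d Z2 (W2 L));
          Z4 = relu (mmul d Z3 (W3 L))
      in madd (mmul d Z4 (W4 L)) X)"

definition f_layer :: "nat \<Rightarrow> nat \<Rightarrow> tlayer \<Rightarrow> mat \<Rightarrow> mat \<Rightarrow> mat" where
  "f_layer K d L X A = f_mlp d L (f_attn K d L X A)"

definition padded :: "nat \<Rightarrow> mat \<Rightarrow> bool" where
  "padded K A = (\<forall>j\<in>{1..K}. A 1 j = 0 \<and> A j 1 = 0)"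

end

(* The layer has no attention heads, and with identity middle weights its MLP acts on each row x
   as x + relu(x P) Q, so three hidden units suffice. Two of them carry z and -z for
   z = x_E - x_V0 + 2 Omega x_C, and relu(-z) - relu(z) = -z erases the old entry x_E. The third is a
   gate: as |x_V1 - x_V0| <= 2 Omega and x_Bg + x_Bl = 1, the unit
   relu(x_V1 - x_V0 + 4 Omega x_C - 2 Omega (x_Bg + x_Bl)) equals x_C (x_V1 - x_V0 + 2 Omega).
   Column E thus becomes x_V0 + x_C (x_V1 - x_V0).
   The hidden width is d, so this needs d >= 3. For d <= 2 the only columns are Bg and Bl, every row
   is one of two fixed 0/1 vectors, and a linear correction read off from x_Bg and x_Bl suffices. *)

theory Submission
  imports Defs
begin

definition mlp_layer :: "mat \<Rightarrow> mat \<Rightarrow> tlayer" where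
  "mlp_layer P Q = \<lparr>heads_A = [], heads_AT = [], heads_I = [], W1 = P, W2 = idm, W3 = idm, W4 = Q\<rparr>"

definition simulates_selection ::
    "nat \<Rightarrow> nat \<Rightarrow> real \<Rightarrow> nat \<Rightarrow> nat \<Rightarrow> nat \<Rightarrow> nat \<Rightarrow> nat \<Rightarrow> nat \<Rightarrow> tlayer \<Rightarrow> bool" where
  "simulates_selection K d \<Omega> V0 V1 C E Bg Bl L \<longleftrightarrow> (\<forall>X A.
     ((\<forall>i\<in>{1..K}. \<bar>X i V0\<bar> \<le> \<Omega> \<and> \<bar>X i V1\<bar> \<le> \<Omega> \<and> (X i C = 0 \<or> X i C = 1))
      \<and> (\<forall>i\<in>{1..K}. X i Bg = (if i = 1 then 1 else 0))
      \<and> (\<forall>i\<in>{1..K}. X i Bl = (if i = 1 then 0 else 1))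
      \<and> padded K A)
     \<longrightarrow> (\<forall>i\<in>{1..K}. \<forall>j\<in>{1..d}.
           f_layer K d L X A i j =
             (if j = E then (if X i C = 1 then X i V1 else X i V0) else X i j)))"

lemma sum_mult_idm: "finite S \<Longrightarrow> j \<in> S \<Longrightarrow> (\<Sum>k\<in>S. f k * idm k j) = f j"
  by (simp add: idm_def if_distrib sum.delta cong: if_cong)

lemma sum_mult_scaled_idm: "finite S \<Longrightarrow> j \<in> S \<Longrightarrow> (\<Sum>k\<in>S. f k * (c * idm k j)) = c * f j"
  using sum_mult_idm[of S j "\<lambda>k. c * f k"] by (simp add: ac_simps)

lemma mmul_idm_right: "j \<in> {1..d} \<Longrightarrow> mmul d M idm i j = M i j"
  unfolding mmul_def by (simp add: sum_mult_idm)

lemma f_attn_no_heads: "f_attn K d (mlp_layer P Q) X A = X"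
  by (simp add: f_attn_def mlp_layer_def sum_heads_def madd_def mzero_def)

lemma f_layer_mlp_layer:
  assumes "j \<in> {1..d}"
  shows "f_layer K d (mlp_layer P Q) X A i j
    = X i j + (\<Sum>h=1..d. max (\<Sum>k=1..d. X i k * P k h) 0 * Q h j)"
proof -
  have hidden: "relu (mmul d (relu (mmul d (relu (mmul d X P)) idm)) idm) i h
      = max (\<Sum>k=1..d. X i k * P k h) 0" if "h \<in> {1..d}" for h
    using that by (simp add: mmul_idm_right relu_def) (simp add: mmul_def)
  have "f_layer K d (mlp_layer P Q) X A i j
      = X i j + (\<Sum>h=1..d. relu (mmul d (relu (mmul d (relu (mmul d X P)) idm)) idm) i h * Q h j)"
    unfolding f_layer_def f_attn_no_heads
    by (simp add: f_mlp_def mlp_layer_def Let_def madd_def mmul_def[of _ _ Q])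
  also have "\<dots> = X i j + (\<Sum>h=1..d. max (\<Sum>k=1..d. X i k * P k h) 0 * Q h j)"
    using hidden by (auto intro!: sum.cong)
  finally show ?thesis .
qed

lemma f_layer_mlp_layer_nonneg:
  assumes "j \<in> {1..d}" and "\<forall>k\<in>{1..d}. X i k \<ge> 0"
  shows "f_layer K d (mlp_layer idm Q) X A i j = X i j + (\<Sum>h=1..d. X i h * Q h j)"
proof -
  have "max (\<Sum>k=1..d. X i k * idm k h) 0 = X i h" if "h \<in> {1..d}" for h
    using that assms(2) by (simp add: sum_mult_idm)
  then show ?thesis
    using assms(1) by (auto simp: f_layer_mlp_layer intro!: sum.cong)
qed

lemma relu_gate:
  fixes w c \<Omega> :: real
  assumes "\<bar>w\<bar> \<le> 2 * \<Omega>" and "c = 0 \<or> c = 1"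
  shows "max (w + 4 * \<Omega> * c - 2 * \<Omega>) 0 = c * (w + 2 * \<Omega>)"
  using assms by (auto simp: max_def abs_le_iff)

lemma simulates_selection_wide:
  assumes "3 \<le> d"
    and "V0 \<in> {1..d}" "V1 \<in> {1..d}" "C \<in> {1..d}" "E \<in> {1..d}"
    and "Bg \<in> {1..d}" "Bl \<in> {1..d}"
  shows "\<exists>L. simulates_selection K d \<Omega> V0 V1 C E Bg Bl L"
proof -
  define P :: mat where "P = (\<lambda>k h.
     if h = 1 then idm k E - idm k V0 + 2 * \<Omega> * idm k C
     else if h = 2 then idm k V0 - idm k E - 2 * \<Omega> * idm k C
     else if h = 3 then idm k V1 - idm k V0 + 4 * \<Omega> * idm k C - 2 * \<Omega> * (idm k Bg + idm k Bl)
     else 0)"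
  define Q :: mat where "Q = (\<lambda>h j. if j = E then idm h 3 + idm h 2 - idm h 1 else 0)"
  have "simulates_selection K d \<Omega> V0 V1 C E Bg Bl (mlp_layer P Q)"
    unfolding simulates_selection_def
  proof (intro allI impI ballI, elim conjE)
    fix X A :: mat and i j
    assume inputs: "\<forall>i\<in>{1..K}. \<bar>X i V0\<bar> \<le> \<Omega> \<and> \<bar>X i V1\<bar> \<le> \<Omega> \<and> (X i C = 0 \<or> X i C = 1)"
      and global: "\<forall>i\<in>{1..K}. X i Bg = (if i = 1 then 1 else 0)"
      and local: "\<forall>i\<in>{1..K}. X i Bl = (if i = 1 then 0 else 1)"
      and i: "i \<in> {1..K}" and j: "j \<in> {1..d}"
    define x where "x = X i"
    define z where "z = x E - x V0 + 2 * \<Omega> * x C"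
    define m where "m = (\<lambda>h. max (\<Sum>k=1..d. x k * P k h) 0)"
    have one: "x Bg + x Bl = 1"
      using global local i by (simp add: x_def)
    have pre1: "(\<Sum>k=1..d. x k * P k 1) = z"
      and pre2: "(\<Sum>k=1..d. x k * P k 2) = - z"
      unfolding P_def z_def using assms(2-7)
      by (simp_all add: distrib_left right_diff_distrib sum.distrib sum_subtractf
          sum_mult_idm sum_mult_scaled_idm)
    have "(\<Sum>k=1..d. x k * P k 3) = (x V1 - x V0) + 4 * \<Omega> * x C - 2 * \<Omega> * (x Bg + x Bl)"
      unfolding P_def using assms(2-7)
      by (simp add: distrib_left right_diff_distrib sum.distrib sum_subtractf
          sum_mult_idm sum_mult_scaled_idm)
    then have pre3: "(\<Sum>k=1..d. x k * P k 3) = (x V1 - x V0) + 4 * \<Omega> * x C - 2 * \<Omega>"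
      by (simp add: one)
    have units: "(1::nat) \<in> {1..d}" "(2::nat) \<in> {1..d}" "(3::nat) \<in> {1..d}"
      using assms(1) by auto
    have "f_layer K d (mlp_layer P Q) X A i E = x E + (\<Sum>h=1..d. m h * Q h E)"
      using assms(5) by (simp add: f_layer_mlp_layer m_def x_def)
    also have "\<dots> = x E + m 3 + m 2 - m 1"
      using units
      by (simp add: Q_def distrib_left right_diff_distrib sum.distrib sum_subtractf sum_mult_idm)
    also have "\<dots> = x V0 + x C * (x V1 - x V0)"
    proof -
      have bounds: "\<bar>x V0\<bar> \<le> \<Omega>" "\<bar>x V1\<bar> \<le> \<Omega>" "x C = 0 \<or> x C = 1"
        using inputs i by (auto simp: x_def)
      have "m 3 = x C * (x V1 - x V0 + 2 * \<Omega>)"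
        unfolding m_def pre3 using bounds by (intro relu_gate) auto
      moreover have "m 2 - m 1 = - z"
        unfolding m_def pre1 pre2 by (simp add: max_def)
      ultimately show ?thesis
        by (simp add: z_def algebra_simps)
    qed
    finally show "f_layer K d (mlp_layer P Q) X A i j =
        (if j = E then (if X i C = 1 then X i V1 else X i V0) else X i j)"
      using inputs i j by (auto simp: f_layer_mlp_layer Q_def x_def)
  qed
  then show ?thesis ..
qed

lemma simulates_selection_narrow:
  assumes "d < 3"
    and "V0 \<in> {1..d}" "V1 \<in> {1..d}" "C \<in> {1..d}" "E \<in> {1..d}"
    and "Bg \<in> {1..d}" "Bl \<in> {1..d}"
  shows "\<exists>L. simulates_selection K d \<Omega> V0 V1 C E Bg Bl L"
proof -
  define row :: "bool \<Rightarrow> nat \<Rightarrow> real" where "row b c = (if (c = Bg) = b then 1 else 0)" for b c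
  define shift :: "bool \<Rightarrow> real" where
    "shift b = (if row b C = 1 then row b V1 else row b V0) - row b E" for b
  define Q :: mat where
    "Q = (\<lambda>h j. if j = E then shift True * idm h Bg + shift False * idm h Bl else 0)"
  have "simulates_selection K d \<Omega> V0 V1 C E Bg Bl (mlp_layer idm Q)"
    unfolding simulates_selection_def
  proof (intro allI impI ballI, elim conjE)
    fix X A :: mat and i j
    assume global: "\<forall>i\<in>{1..K}. X i Bg = (if i = 1 then 1 else 0)"
      and local: "\<forall>i\<in>{1..K}. X i Bl = (if i = 1 then 0 else 1)"
      and i: "i \<in> {1..K}" and j: "j \<in> {1..d}"
    have "Bg \<noteq> Bl"
      using global local i by force
    then have cols: "{1..d} = {Bg, Bl}"
      using assms(1,6,7) by auto
    have x_row: "X i c = row (i = 1) c" if "c \<in> {1..d}" for c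
      using that global local i \<open>Bg \<noteq> Bl\<close> unfolding cols row_def by auto
    have "f_layer K d (mlp_layer idm Q) X A i j = X i j + (\<Sum>h=1..d. X i h * Q h j)"
      using j x_row by (intro f_layer_mlp_layer_nonneg) (auto simp: row_def)
    also have "\<dots> = (if j = E then X i j + shift (i = 1) else X i j)"
    proof (cases "j = E")
      case True
      have "(\<Sum>h=1..d. X i h * Q h j) = X i Bg * shift True + X i Bl * shift False"
        unfolding cols using \<open>Bg \<noteq> Bl\<close> True by (simp add: Q_def idm_def)
      then show ?thesis
        using True global local i by auto
    qed (simp add: Q_def)
    also have "\<dots> = (if j = E then (if X i C = 1 then X i V1 else X i V0) else X i j)"
      using x_row assms(2-5) by (simp add: shift_def)
    finally show "f_layer K d (mlp_layer idm Q) X A i j =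
        (if j = E then (if X i C = 1 then X i V1 else X i V0) else X i j)" .
  qed
  then show ?thesis ..
qed

theorem lemmaC1:
  fixes K d :: nat and \<Omega> :: real and V0 V1 C E Bg Bl :: nat
  assumes "\<Omega> > 0"
    and "V0 \<in> {1..d}" "V1 \<in> {1..d}" "C \<in> {1..d}" "E \<in> {1..d}"
    and "Bg \<in> {1..d}" "Bl \<in> {1..d}"
  shows "\<exists>L :: tlayer. \<forall>X A.
     ((\<forall>i\<in>{1..K}. \<bar>X i V0\<bar> \<le> \<Omega> \<and> \<bar>X i V1\<bar> \<le> \<Omega> \<and> (X i C = 0 \<or> X i C = 1))
      \<and> (\<forall>i\<in>{1..K}. X i Bg = (if i = 1 then 1 else 0))
      \<and> (\<forall>i\<in>{1..K}. X i Bl = (if i = 1 then 0 else 1))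
      \<and> padded K A)
     \<longrightarrow> (\<forall>i\<in>{1..K}. \<forall>j\<in>{1..d}.
           f_layer K d L X A i j =
             (if j = E then (if X i C = 1 then X i V1 else X i V0) else X i j))"
proof -
  obtain L where "simulates_selection K d \<Omega> V0 V1 C E Bg Bl L"
    using simulates_selection_wide[OF _ assms(2-7)] simulates_selection_narrow[OF _ assms(2-7)]
    by (cases "3 \<le> d") auto
  then show ?thesis
    unfolding simulates_selection_def by blast
qed

end
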